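(* Let $n\ge2$, $q\in\mathbb C$ a primitive $n$-th root of unity, and $u_q(sl_2)$ the $\mathbb C$-algebra with generators $K,E,F$ and relations $K^n=1$, $E^n=F^n=0$, $EK=qKE$, $FK=q^{-1}KF$, $EF-FE=\frac{K-K^{-1}}{q-q^{-1}}$, with basis $\{K^iF^jE^k:0\le i,j,k\le n-1\}$. Let $\int$ be the linear functional with $\int KF^{n-1}E^{n-1}=1$ and $\int$ zero on all other basis monomials. Then $(h,g):=\int Khg$ is a symmetric Frobenius form on $u_q(sl_2)$.
   Context: A Frobenius form on an algebra $A$ is a bilinear form $(\ ,\ )$ with $(ab,c)=(a,bc)$ for all $a,b,c$ whose induced map $A\to A^*$, $a\mapsto(a,\ )$, is invertible; it is symmetric if $(a,b)=(b,a)$ for all $a,b$. *)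

theory Defs
  imports Complex_Main
begin

definition complex_algebra :: "(complex \<Rightarrow> 'a::ring_1 \<Rightarrow> 'a) \<Rightarrow> bool" where
  "complex_algebra scl \<longleftrightarrow> vector_space scl \<and>
     (\<forall>c a b. scl c (a * b) = scl c a * b \<and> scl c (a * b) = a * scl c b)"

definition frobenius_form ::
  "(complex \<Rightarrow> 'a::ring_1 \<Rightarrow> 'a) \<Rightarrow> ('a \<Rightarrow> 'a \<Rightarrow> complex) \<Rightarrow> bool" where
  "frobenius_form scl B \<longleftrightarrow>
     (\<forall>a. Vector_Spaces.linear scl (*) (B a)) \<and>
     (\<forall>b. Vector_Spaces.linear scl (*) (\<lambda>a. B a b)) \<and>
     (\<forall>a b c. B (a * b) c = B a (b * c)) \<and>
     bij_betw B UNIV {f. Vector_Spaces.linear scl (*) f}"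

definition symmetric_form :: "('a \<Rightarrow> 'a \<Rightarrow> complex) \<Rightarrow> bool" where
  "symmetric_form B \<longleftrightarrow> (\<forall>a b. B a b = B b a)"

definition primitive_root_of_unity :: "nat \<Rightarrow> complex \<Rightarrow> bool" where
  "primitive_root_of_unity n q \<longleftrightarrow> q ^ n = 1 \<and> (\<forall>k. 0 < k \<and> k < n \<longrightarrow> q ^ k \<noteq> 1)"

end

theory Submission imports Defs begin

(* Write phi x = intg (K * x), so that the form is (h, g) = phi (h * g); it is associative for
  free, and it is symmetric iff phi is a trace. By linearity phi is a trace once
  phi (x * g) = phi (g * x) for the generators g = K, E, F and the basis monomials
  x = K^i F^j E^k. For g = K the two sides differ by the factor q^k q^-j, which is 1 on the only
  monomials phi sees (j = k = n - 1). For g = E, moving E past F^j produces, besides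
  K^i F^j E^(k+1), terms K^i F^(j-1) p E^k with p a polynomial in K; phi kills these because
  their F-degree is below n - 1. The case g = F is symmetric.
  Nondegeneracy: by the trace property the elements E^(n-1-k) F^(n-1-j) K^(n-i) form a basis
  dual to the monomials K^i F^j E^k, so h \<mapsto> (h, -) is a bijection onto the dual space. *)

lemma power_eq_power_mod:
  fixes x :: "'a::monoid_mult"
  assumes "x ^ n = 1"
  shows "x ^ m = x ^ (m mod n)"
proof -
  have "x ^ m = x ^ (n * (m div n) + m mod n)" by simp
  also have "\<dots> = (x ^ n) ^ (m div n) * x ^ (m mod n)"
    by (simp only: power_add power_mult)
  finally show ?thesis using assms by simp
qed

lemma power_eq_0_mono:
  fixes x :: "'a::semiring_1"
  assumes "x ^ n = 0" "n \<le> m"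
  shows "x ^ m = 0"
proof -
  have "x ^ m = x ^ n * x ^ (m - n)"
    using assms(2) by (simp flip: power_add)
  with assms(1) show ?thesis by simp
qed

lemma diff_add_mod_eq_0_iff:
  fixes i i' n :: nat
  assumes "i < n" "i' < n"
  shows "(n - i + i') mod n = 0 \<longleftrightarrow> i' = i"
proof (cases "i \<le> i'")
  case True
  then have "n - i + i' = (i' - i) + n" using assms(1) by linarith
  then have "(n - i + i') mod n = i' - i" using assms(2) by (simp only: mod_add_self2) simp
  then show ?thesis using True by auto
next
  case False
  then show ?thesis using assms by simp
qed

lemma vector_space_complex_mult: "vector_space ((*) :: complex \<Rightarrow> complex \<Rightarrow> complex)"
  by unfold_locales (simp_all add: algebra_simps)

lemma linear_sum_scale:
  assumes "Vector_Spaces.linear scl (*) f"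
  shows "f (\<Sum>m\<in>A. scl (c m) (v m)) = (\<Sum>m\<in>A. c m * f (v m))"
proof -
  have hom: "module_hom scl (*) f" using assms by (simp add: linear_iff_module_hom)
  show ?thesis by (simp add: module_hom.sum[OF hom] module_hom.scale[OF hom])
qed

lemma (in vector_space) span_image_sum_repr:
  assumes "finite I" "inj_on v I" "x \<in> span (v ` I)"
  obtains c where "x = (\<Sum>m\<in>I. c m *s v m)"
proof -
  obtain u where "x = (\<Sum>y\<in>v ` I. u y *s y)"
    using assms span_finite[of "v ` I"] by auto
  also have "\<dots> = (\<Sum>m\<in>I. u (v m) *s v m)"
    using sum.reindex[OF assms(2)] by simp
  finally show ?thesis by (rule that)
qed

lemma inj_form_of_dual_basis:
  fixes scl :: "complex \<Rightarrow> 'a::ab_group_add \<Rightarrow> 'a" and B :: "'a \<Rightarrow> 'a \<Rightarrow> complex"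
  assumes lin_left: "\<And>b. Vector_Spaces.linear scl (*) (\<lambda>a. B a b)"
    and I: "finite I" "inj_on v I" and spans: "module.span scl (v ` I) = UNIV"
    and dual: "\<And>m m'. m \<in> I \<Longrightarrow> m' \<in> I \<Longrightarrow> B (v m) (w m') = (if m = m' then 1 else 0)"
  shows "inj B"
proof (rule injI)
  interpret vector_space scl
    using lin_left[of 0] by (simp add: Vector_Spaces.linear_iff)
  have coeff: "B x (w m) = c m" if "x = (\<Sum>m\<in>I. scl (c m) (v m))" "m \<in> I" for x c m
  proof -
    have "B x (w m) = (\<Sum>m'\<in>I. c m' * B (v m') (w m))"
      unfolding that(1) by (rule linear_sum_scale[OF lin_left])
    also have "\<dots> = (\<Sum>m'\<in>I. if m' = m then c m' else 0)"
      by (intro sum.cong refl) (simp add: dual that(2))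
    also have "\<dots> = c m"
      using that(2) I(1) by simp
    finally show ?thesis .
  qed
  fix h1 h2 assume eq: "B h1 = B h2"
  obtain c1 where c1: "h1 = (\<Sum>m\<in>I. scl (c1 m) (v m))"
    using span_image_sum_repr[OF I] spans by blast
  obtain c2 where c2: "h2 = (\<Sum>m\<in>I. scl (c2 m) (v m))"
    using span_image_sum_repr[OF I] spans by blast
  have "c1 m = c2 m" if "m \<in> I" for m
    using coeff[OF c1 that] coeff[OF c2 that] fun_cong[OF eq, of "w m"] by simp
  then show "h1 = h2" unfolding c1 c2 by (intro sum.cong refl) simp
qed

lemma range_form_of_dual_basis:
  fixes scl :: "complex \<Rightarrow> 'a::ab_group_add \<Rightarrow> 'a" and B :: "'a \<Rightarrow> 'a \<Rightarrow> complex"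
  assumes lin_left: "\<And>b. Vector_Spaces.linear scl (*) (\<lambda>a. B a b)"
    and lin_right: "\<And>a. Vector_Spaces.linear scl (*) (B a)"
    and I: "finite I" and spans: "module.span scl (v ` I) = UNIV"
    and dual: "\<And>m m'. m \<in> I \<Longrightarrow> m' \<in> I \<Longrightarrow> B (w m) (v m') = (if m = m' then 1 else 0)"
  shows "range B = {f. Vector_Spaces.linear scl (*) f}"
proof (intro equalityI subsetI)
  interpret vector_space_pair scl "(*) :: complex \<Rightarrow> _"
    using lin_left[of 0] unfolding vector_space_pair_def by (simp add: Vector_Spaces.linear_iff)
  fix f assume "f \<in> {f. Vector_Spaces.linear scl (*) f}"
  then have f: "Vector_Spaces.linear scl (*) f" by simp
  define a where "a = (\<Sum>m\<in>I. scl (f (v m)) (w m))"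
  have on_basis: "B a (v m) = f (v m)" if "m \<in> I" for m
  proof -
    have "B a (v m) = (\<Sum>m'\<in>I. f (v m') * B (w m') (v m))"
      unfolding a_def by (rule linear_sum_scale[OF lin_left])
    also have "\<dots> = (\<Sum>m'\<in>I. if m' = m then f (v m') else 0)"
      by (intro sum.cong refl) (simp add: dual that)
    also have "\<dots> = f (v m)"
      using that I by simp
    finally show ?thesis .
  qed
  have "B a = f"
  proof (rule ext)
    fix x
    show "B a x = f x"
      by (rule linear_eq_on_span[OF lin_right[of a] f, of "v ` I"]) (auto simp: on_basis spans)
  qed
  then show "f \<in> range B" by (rule range_eqI[OF sym])
qed (use lin_right in auto)

lemma bij_betw_form_of_dual_bases:
  fixes scl :: "complex \<Rightarrow> 'a::ab_group_add \<Rightarrow> 'a" and B :: "'a \<Rightarrow> 'a \<Rightarrow> complex"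
  assumes "\<And>b. Vector_Spaces.linear scl (*) (\<lambda>a. B a b)"
    and "\<And>a. Vector_Spaces.linear scl (*) (B a)"
    and "finite I" "inj_on v I" "module.span scl (v ` I) = UNIV"
    and "\<And>m m'. m \<in> I \<Longrightarrow> m' \<in> I \<Longrightarrow> B (v m) (w m') = (if m = m' then 1 else 0)"
    and "\<And>m m'. m \<in> I \<Longrightarrow> m' \<in> I \<Longrightarrow> B (w m) (v m') = (if m = m' then 1 else 0)"
  shows "bij_betw B UNIV {f. Vector_Spaces.linear scl (*) f}"
  using inj_form_of_dual_basis[OF assms(1,3-6)] range_form_of_dual_basis[OF assms(1-3,5,7)]
  by (simp add: bij_betw_def)

definition trace_commutes :: "('a::ring_1 \<Rightarrow> 'b) \<Rightarrow> 'a \<Rightarrow> bool" where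
  "trace_commutes \<phi> y \<longleftrightarrow> (\<forall>x. \<phi> (x * y) = \<phi> (y * x))"

lemma trace_commutes_mult:
  assumes "trace_commutes \<phi> a" "trace_commutes \<phi> b"
  shows "trace_commutes \<phi> (a * b)"
  unfolding trace_commutes_def
proof
  fix x
  have "\<phi> (x * (a * b)) = \<phi> (b * (x * a))"
    using assms(2) unfolding trace_commutes_def by (metis mult.assoc)
  also have "\<dots> = \<phi> ((a * b) * x)"
    using assms(1) unfolding trace_commutes_def by (metis mult.assoc)
  finally show "\<phi> (x * (a * b)) = \<phi> ((a * b) * x)" .
qed

lemma trace_commutes_power:
  assumes "trace_commutes \<phi> a"
  shows "trace_commutes \<phi> (a ^ k)"
proof (induction k)
  case 0
  show ?case by (simp add: trace_commutes_def)
next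
  case (Suc k)
  then show ?case using trace_commutes_mult[OF assms] by simp
qed

locale complex_assoc_algebra =
  fixes scl :: "complex \<Rightarrow> 'a::ring_1 \<Rightarrow> 'a"
  assumes complex_algebra: "complex_algebra scl"
begin

sublocale vector_space scl
  using complex_algebra unfolding complex_algebra_def by blast

lemma scale_mult_left [simp]: "scl c a * b = scl c (a * b)"
  and scale_mult_right [simp]: "a * scl c b = scl c (a * b)"
  using complex_algebra unfolding complex_algebra_def by metis+

lemma linear_sandwich:
  assumes "Vector_Spaces.linear scl (*) \<phi>"
  shows "Vector_Spaces.linear scl (*) (\<lambda>x. \<phi> (a * x * b))"
  using assms unfolding Vector_Spaces.linear_iff by (simp add: distrib_left distrib_right)

lemma trace_commutes_on_span:
  assumes "Vector_Spaces.linear scl (*) \<phi>" "y \<in> span S"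
    and "\<And>s. s \<in> S \<Longrightarrow> \<phi> (x * s) = \<phi> (s * x)"
  shows "\<phi> (x * y) = \<phi> (y * x)"
proof -
  interpret vector_space_pair scl "(*) :: complex \<Rightarrow> _"
    unfolding vector_space_pair_def using vector_space_axioms vector_space_complex_mult by blast
  have "Vector_Spaces.linear scl (*) (\<lambda>z. \<phi> (x * z))" "Vector_Spaces.linear scl (*) (\<lambda>z. \<phi> (z * x))"
    using linear_sandwich[OF assms(1), of x 1] linear_sandwich[OF assms(1), of 1 x] by simp_all
  then show ?thesis
    by (rule linear_eq_on_span[of _ _ S]) (simp_all add: assms)
qed

lemma twisted_commute_power:
  assumes xy: "x * y = scl c (y * x)"
  shows "x ^ k * y ^ l = scl (c ^ (k * l)) (y ^ l * x ^ k)"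
proof -
  have x_yl: "x * y ^ l = scl (c ^ l) (y ^ l * x)" for l
  proof (induction l)
    case 0
    show ?case by simp
  next
    case (Suc l)
    have "x * y ^ Suc l = scl c (y * (x * y ^ l))"
      by (simp add: xy flip: mult.assoc)
    also have "\<dots> = scl (c ^ Suc l) (y ^ Suc l * x)"
      by (simp add: Suc mult.assoc)
    finally show ?case .
  qed
  show ?thesis
  proof (induction k)
    case 0
    show ?case by simp
  next
    case (Suc k)
    have "x ^ Suc k * y ^ l = scl (c ^ (k * l)) (x * y ^ l * x ^ k)"
      by (simp add: Suc mult.assoc)
    also have "\<dots> = scl (c ^ (Suc k * l)) (y ^ l * x ^ Suc k)"
      by (simp add: x_yl mult.assoc power_add mult.commute)
    finally show ?case .
  qed
qed

lemma twisted_commute_span_powers_right: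
  assumes xy: "x * y = scl c (y * x)" and "p \<in> span (range (\<lambda>l. y ^ l))"
  shows "\<exists>p'\<in>span (range (\<lambda>l. y ^ l)). x * p = p' * x"
  using assms(2)
proof (induction p rule: span_induct_alt)
  case base
  show ?case by (intro bexI[of _ 0]) (auto intro: span_zero)
next
  case (step d z r)
  then obtain l where z: "z = y ^ l" by blast
  from step obtain r' where r': "r' \<in> span (range (\<lambda>l. y ^ l))" "x * r = r' * x" by blast
  have "x * (scl d z + r) = (scl (d * c ^ l) (y ^ l) + r') * x"
    using twisted_commute_power[OF xy, of 1 l] r'(2) by (simp add: z distrib_left distrib_right)
  moreover have "scl (d * c ^ l) (y ^ l) + r' \<in> span (range (\<lambda>l. y ^ l))"
    using r'(1) by (intro span_add span_scale) (auto intro: span_base)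
  ultimately show ?case by blast
qed

lemma twisted_commute_span_powers_left:
  assumes xy: "x * y = scl c (y * x)" and "p \<in> span (range (\<lambda>k. x ^ k))"
  shows "\<exists>p'\<in>span (range (\<lambda>k. x ^ k)). p * y = y * p'"
  using assms(2)
proof (induction p rule: span_induct_alt)
  case base
  show ?case by (intro bexI[of _ 0]) (auto intro: span_zero)
next
  case (step d z r)
  then obtain k where z: "z = x ^ k" by blast
  from step obtain r' where r': "r' \<in> span (range (\<lambda>k. x ^ k))" "r * y = y * r'" by blast
  have "(scl d z + r) * y = y * (scl (d * c ^ k) (x ^ k) + r')"
    using twisted_commute_power[OF xy, of k 1] r'(2) by (simp add: z distrib_left distrib_right)
  moreover have "scl (d * c ^ k) (x ^ k) + r' \<in> span (range (\<lambda>k. x ^ k))"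
    using r'(1) by (intro span_add span_scale) (auto intro: span_base)
  ultimately show ?case by blast
qed

end

locale small_quantum_sl2 = complex_assoc_algebra scl
  for scl :: "complex \<Rightarrow> 'a::ring_1 \<Rightarrow> 'a" +
  fixes n :: nat and q :: complex and K E F :: 'a and intg :: "'a \<Rightarrow> complex"
  assumes n_ge_2: "n \<ge> 2"
    and q_root: "q ^ n = 1"
    and relK: "K ^ n = 1"
    and relE: "E ^ n = 0"
    and relF: "F ^ n = 0"
    and relEK: "E * K = scl q (K * E)"
    and relFK: "F * K = scl (inverse q) (K * F)"
    and relEF: "E * F - F * E = scl (1 / (q - inverse q)) (K - K ^ (n - 1))"
    and monomials_inj: "inj_on (\<lambda>(i, j, k). K ^ i * F ^ j * E ^ k) ({..<n} \<times> {..<n} \<times> {..<n})"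
    and monomials_span: "span ((\<lambda>(i, j, k). K ^ i * F ^ j * E ^ k) ` ({..<n} \<times> {..<n} \<times> {..<n})) = UNIV"
    and intg_linear: "Vector_Spaces.linear scl (*) intg"
    and intg_monomial: "\<And>i j k. i < n \<Longrightarrow> j < n \<Longrightarrow> k < n \<Longrightarrow>
        intg (K ^ i * F ^ j * E ^ k) = (if i = 1 \<and> j = n - 1 \<and> k = n - 1 then 1 else 0)"
begin

definition monomial :: "nat \<times> nat \<times> nat \<Rightarrow> 'a" where
  "monomial = (\<lambda>(i, j, k). K ^ i * F ^ j * E ^ k)"

lemma span_monomials: "span (monomial ` ({..<n} \<times> {..<n} \<times> {..<n})) = UNIV"
  using monomials_span by (simp add: monomial_def)

definition phi :: "'a \<Rightarrow> complex" where
  "phi x = intg (K * x)"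

definition Kpoly :: "'a set" where
  "Kpoly = span (range (\<lambda>a. K ^ a))"

lemma q_nonzero: "q \<noteq> 0"
  using q_root n_ge_2 by (cases "q = 0") (auto simp: power_0_left)

lemma phi_linear: "Vector_Spaces.linear scl (*) phi"
  using linear_sandwich[OF intg_linear, of K 1] by (simp add: phi_def[abs_def])

lemma phi_add: "phi (x + y) = phi x + phi y"
  and phi_scale: "phi (scl c x) = c * phi x"
  using phi_linear by (simp_all add: Vector_Spaces.linear_iff)

lemma phi_monomial:
  "phi (K ^ m * F ^ j * E ^ k) = (if m mod n = 0 \<and> j = n - 1 \<and> k = n - 1 then 1 else 0)"
proof (cases "j < n \<and> k < n")
  case True
  have "phi (K ^ m * F ^ j * E ^ k) = intg (K ^ Suc m * F ^ j * E ^ k)"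
    unfolding phi_def by (simp add: mult.assoc)
  also have "\<dots> = intg (K ^ (Suc m mod n) * F ^ j * E ^ k)"
    by (simp only: power_eq_power_mod[OF relK, of "Suc m"])
  also have "\<dots> = (if Suc m mod n = 1 \<and> j = n - 1 \<and> k = n - 1 then 1 else 0)"
    using True n_ge_2 by (intro intg_monomial) auto
  also have "(Suc m mod n = 1) = (m mod n = 0)"
    using n_ge_2 by (auto simp: mod_Suc)
  finally show ?thesis .
next
  case False
  then have "F ^ j = 0 \<or> E ^ k = 0"
    using power_eq_0_mono[OF relF, of j] power_eq_0_mono[OF relE, of k] by linarith
  then show ?thesis
    using False n_ge_2 phi_scale[of 0 0] by auto
qed

lemma E_K_power: "E ^ k * K ^ a = scl (q ^ (k * a)) (K ^ a * E ^ k)"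
  using twisted_commute_power[OF relEK] .

lemma F_K_power: "F ^ k * K ^ a = scl (inverse q ^ (k * a)) (K ^ a * F ^ k)"
  using twisted_commute_power[OF relFK] .

lemma K_F: "K * F = scl q (F * K)"
  using q_nonzero by (simp add: relFK)

lemma E_mult_Kpoly: "p \<in> Kpoly \<Longrightarrow> \<exists>p'\<in>Kpoly. E * p = p' * E"
  unfolding Kpoly_def by (rule twisted_commute_span_powers_right[OF relEK])

lemma Kpoly_mult_F: "p \<in> Kpoly \<Longrightarrow> \<exists>p'\<in>Kpoly. p * F = F * p'"
  unfolding Kpoly_def by (rule twisted_commute_span_powers_left[OF K_F])

lemma Kpoly_add: "p \<in> Kpoly \<Longrightarrow> p' \<in> Kpoly \<Longrightarrow> p + p' \<in> Kpoly"
  unfolding Kpoly_def by (rule span_add)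

lemma commutator_E_F_in_Kpoly: "E * F - F * E \<in> Kpoly"
proof -
  have "K \<in> range (\<lambda>a. K ^ a)" by (metis power_one_right rangeI)
  then show ?thesis
    unfolding relEF Kpoly_def by (intro span_scale span_diff) (auto intro: span_base)
qed

lemma E_mult_F_power: "\<exists>p\<in>Kpoly. E * F ^ Suc j = F ^ Suc j * E + F ^ j * p"
proof (induction j)
  case 0
  show ?case using commutator_E_F_in_Kpoly by (intro bexI[of _ "E * F - F * E"]) auto
next
  case (Suc j)
  then obtain p where p: "p \<in> Kpoly" "E * F ^ Suc j = F ^ Suc j * E + F ^ j * p" by blast
  obtain p' where p': "p' \<in> Kpoly" "p * F = F * p'" using Kpoly_mult_F[OF p(1)] by blast
  have "E * F ^ Suc (Suc j) = (E * F ^ Suc j) * F"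
    by (simp add: mult.assoc power_Suc2 del: power_Suc)
  also have "\<dots> = F ^ Suc j * (E * F) + F ^ j * (p * F)"
    using p(2) by (simp add: distrib_right mult.assoc power_Suc2 del: power_Suc)
  also have "\<dots> = F ^ Suc (Suc j) * E + F ^ Suc j * ((E * F - F * E) + p')"
    by (simp add: p'(2) algebra_simps power_Suc2 del: power_Suc)
  finally show ?case using Kpoly_add[OF commutator_E_F_in_Kpoly p'(1)] by blast
qed

lemma E_power_mult_F: "\<exists>p\<in>Kpoly. E ^ Suc k * F = F * E ^ Suc k + p * E ^ k"
proof (induction k)
  case 0
  show ?case using commutator_E_F_in_Kpoly by (intro bexI[of _ "E * F - F * E"]) auto
next
  case (Suc k)
  then obtain p where p: "p \<in> Kpoly" "E ^ Suc k * F = F * E ^ Suc k + p * E ^ k" by blast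
  obtain p' where p': "p' \<in> Kpoly" "E * p = p' * E" using E_mult_Kpoly[OF p(1)] by blast
  have "E ^ Suc (Suc k) * F = (E * F) * E ^ Suc k + (E * p) * E ^ k"
    using p(2) by (simp add: distrib_left mult.assoc)
  also have "\<dots> = F * E ^ Suc (Suc k) + ((E * F - F * E) + p') * E ^ Suc k"
    by (simp add: p'(2) algebra_simps)
  finally show ?case using Kpoly_add[OF commutator_E_F_in_Kpoly p'(1)] by blast
qed

lemma phi_Kpoly_vanish:
  assumes "p \<in> Kpoly" "\<not> (j = n - 1 \<and> k = n - 1)"
  shows "phi (K ^ i * F ^ j * p * E ^ k) = 0"
  using assms(1) unfolding Kpoly_def
proof (induction p rule: span_induct_alt)
  case base
  show ?case by (simp add: phi_scale[of 0 0, simplified])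
next
  case (step c z r)
  then obtain a where z: "z = K ^ a" by blast
  have "K ^ i * F ^ j * K ^ a * E ^ k = scl (inverse q ^ (j * a)) (K ^ (i + a) * F ^ j * E ^ k)"
    by (simp add: F_K_power mult.assoc power_add flip: scale_mult_right)
  moreover have "phi (K ^ (i + a) * F ^ j * E ^ k) = 0"
    using assms(2) by (simp add: phi_monomial)
  ultimately have "phi (K ^ i * F ^ j * K ^ a * E ^ k) = 0"
    by (simp add: phi_scale)
  then show ?case
    using step(2) by (simp add: z distrib_left distrib_right phi_add phi_scale mult.assoc)
qed

lemma phi_commute_K_monomial: "phi (K ^ i * F ^ j * E ^ k * K) = phi (K * (K ^ i * F ^ j * E ^ k))"
proof -
  have "K ^ i * F ^ j * E ^ k * K = scl (q ^ k) (K ^ i * (F ^ j * K) * E ^ k)"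
    using E_K_power[of k 1] by (simp add: mult.assoc)
  also have "\<dots> = scl (q ^ k * inverse q ^ j) (K ^ Suc i * F ^ j * E ^ k)"
    using F_K_power[of j 1] by (simp add: mult.assoc power_Suc2 del: power_Suc)
  finally have weight:
    "phi (K ^ i * F ^ j * E ^ k * K) = q ^ k * inverse q ^ j * phi (K ^ Suc i * F ^ j * E ^ k)"
    by (simp add: phi_scale)
  have rhs: "K * (K ^ i * F ^ j * E ^ k) = K ^ Suc i * F ^ j * E ^ k"
    by (simp add: mult.assoc)
  show ?thesis
  proof (cases "j = n - 1 \<and> k = n - 1")
    case True
    then have "q ^ k * inverse q ^ j = 1"
      using q_nonzero by (simp add: power_inverse)
    then show ?thesis using weight rhs by simp
  next
    case False
    then have "phi (K ^ Suc i * F ^ j * E ^ k) = 0"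
      using phi_monomial[of "Suc i" j k] by simp
    then show ?thesis using weight rhs by simp
  qed
qed

lemma root_power_mult_phi_monomial:
  assumes "c ^ n = 1"
  shows "c ^ i * phi (K ^ i * F ^ j * E ^ k) = phi (K ^ i * F ^ j * E ^ k)"
  using power_eq_power_mod[OF assms, of i] phi_monomial[of i j k] by auto

lemma phi_commute_E_monomial:
  assumes "j < n"
  shows "phi (K ^ i * F ^ j * E ^ k * E) = phi (E * (K ^ i * F ^ j * E ^ k))"
proof -
  have E_Ki: "E * K ^ i = scl (q ^ i) (K ^ i * E)"
    using E_K_power[of 1 i] by simp
  have "phi (E * (K ^ i * F ^ j * E ^ k)) = q ^ i * phi (K ^ i * F ^ j * E ^ Suc k)"
  proof (cases j)
    case 0
    then show ?thesis by (simp add: E_Ki phi_scale flip: mult.assoc)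
  next
    case (Suc j')
    obtain p where p: "p \<in> Kpoly" "E * F ^ Suc j' = F ^ Suc j' * E + F ^ j' * p"
      using E_mult_F_power by blast
    have "E * (K ^ i * F ^ j * E ^ k) = scl (q ^ i) (K ^ i * (E * F ^ Suc j') * E ^ k)"
      using Suc by (simp add: E_Ki flip: mult.assoc)
    also have "\<dots> = scl (q ^ i) (K ^ i * F ^ j * E ^ Suc k + K ^ i * F ^ j' * p * E ^ k)"
      using p(2) Suc by (simp add: distrib_left distrib_right mult.assoc)
    finally have "E * (K ^ i * F ^ j * E ^ k) =
        scl (q ^ i) (K ^ i * F ^ j * E ^ Suc k + K ^ i * F ^ j' * p * E ^ k)" .
    moreover have "phi (K ^ i * F ^ j' * p * E ^ k) = 0"
      using Suc assms by (intro phi_Kpoly_vanish[OF p(1)]) auto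
    ultimately show ?thesis by (simp add: phi_add phi_scale)
  qed
  also have "\<dots> = phi (K ^ i * F ^ j * E ^ Suc k)"
    by (rule root_power_mult_phi_monomial[OF q_root])
  also have "K ^ i * F ^ j * E ^ Suc k = K ^ i * F ^ j * E ^ k * E"
    by (simp add: mult.assoc power_Suc2 del: power_Suc)
  finally show ?thesis ..
qed

lemma phi_commute_F_monomial:
  assumes "k < n"
  shows "phi (K ^ i * F ^ j * E ^ k * F) = phi (F * (K ^ i * F ^ j * E ^ k))"
proof -
  have "phi (K ^ i * F ^ j * E ^ k * F) = phi (K ^ i * F ^ Suc j * E ^ k)"
  proof (cases k)
    case 0
    then show ?thesis by (simp add: mult.assoc power_Suc2 del: power_Suc)
  next
    case (Suc k')
    obtain p where p: "p \<in> Kpoly" "E ^ Suc k' * F = F * E ^ Suc k' + p * E ^ k'"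
      using E_power_mult_F by blast
    have "K ^ i * F ^ j * E ^ k * F = K ^ i * F ^ Suc j * E ^ k + K ^ i * F ^ j * p * E ^ k'"
      using p(2) Suc by (simp add: distrib_left mult.assoc power_Suc2 del: power_Suc)
    moreover have "phi (K ^ i * F ^ j * p * E ^ k') = 0"
      using Suc assms by (intro phi_Kpoly_vanish[OF p(1)]) auto
    ultimately show ?thesis by (simp add: phi_add)
  qed
  also have "\<dots> = inverse q ^ i * phi (K ^ i * F ^ Suc j * E ^ k)"
    using root_power_mult_phi_monomial[of "inverse q" i "Suc j" k] q_root by (simp add: power_inverse)
  also have "\<dots> = phi (F * (K ^ i * F ^ j * E ^ k))"
    using F_K_power[of 1 i] by (simp add: phi_scale flip: mult.assoc)
  finally show ?thesis .
qed

lemma trace_commutes_phiI: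
  assumes "\<And>i j k. i < n \<Longrightarrow> j < n \<Longrightarrow> k < n \<Longrightarrow>
      phi (K ^ i * F ^ j * E ^ k * g) = phi (g * (K ^ i * F ^ j * E ^ k))"
  shows "trace_commutes phi g"
  unfolding trace_commutes_def
proof
  fix x
  have "phi (g * x) = phi (x * g)"
    using span_monomials
    by (intro trace_commutes_on_span[OF phi_linear, of x]) (auto simp: monomial_def assms)
  then show "phi (x * g) = phi (g * x)" ..
qed

lemma phi_commute: "phi (x * y) = phi (y * x)"
proof -
  have "trace_commutes phi K" "trace_commutes phi E" "trace_commutes phi F"
    using phi_commute_K_monomial phi_commute_E_monomial phi_commute_F_monomial
    by (auto intro: trace_commutes_phiI)
  then have "trace_commutes phi (K ^ i * F ^ j * E ^ k)" for i j k
    by (intro trace_commutes_mult trace_commutes_power)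
  then show ?thesis
    using span_monomials
    by (intro trace_commutes_on_span[OF phi_linear, of y]) (auto simp: monomial_def trace_commutes_def)
qed

(* K ^ (n - i) is K^-i, as K ^ n = 1. *)
definition dual_monomial :: "nat \<times> nat \<times> nat \<Rightarrow> 'a" where
  "dual_monomial = (\<lambda>(i, j, k). E ^ (n - 1 - k) * F ^ (n - 1 - j) * K ^ (n - i))"

lemma phi_F_K_monomial_E:
  "phi (F ^ a * K ^ b * (K ^ i * F ^ j * E ^ k) * E ^ c) =
    inverse q ^ (a * (b + i)) * (if (b + i) mod n = 0 \<and> a + j = n - 1 \<and> k + c = n - 1 then 1 else 0)"
proof -
  have "F ^ a * K ^ b * (K ^ i * F ^ j * E ^ k) * E ^ c = (F ^ a * K ^ (b + i)) * F ^ j * E ^ (k + c)"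
    by (simp add: mult.assoc power_add)
  also have "\<dots> = scl (inverse q ^ (a * (b + i))) (K ^ (b + i) * F ^ (a + j) * E ^ (k + c))"
    by (simp only: F_K_power scale_mult_left) (simp add: mult.assoc power_add)
  finally show ?thesis by (simp only: phi_scale phi_monomial)
qed

lemma phi_monomial_dual_monomial:
  assumes "m \<in> {..<n} \<times> {..<n} \<times> {..<n}" "m' \<in> {..<n} \<times> {..<n} \<times> {..<n}"
  shows "phi (monomial m' * dual_monomial m) = (if m' = m then 1 else 0)"
proof -
  obtain i j k i' j' k' where m: "m = (i, j, k)" "m' = (i', j', k')"
    by (cases m, cases m') auto
  have bounds: "i < n" "j < n" "k < n" "i' < n" "j' < n" "k' < n"
    using assms m by auto
  have "phi (monomial m' * dual_monomial m) =
      phi (F ^ (n - 1 - j) * K ^ (n - i) * (K ^ i' * F ^ j' * E ^ k') * E ^ (n - 1 - k))"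
    using phi_commute[of "K ^ i' * F ^ j' * E ^ k' * E ^ (n - 1 - k)" "F ^ (n - 1 - j) * K ^ (n - i)"]
    by (simp add: m monomial_def dual_monomial_def mult.assoc)
  also have "\<dots> = inverse q ^ ((n - 1 - j) * (n - i + i')) *
      (if (n - i + i') mod n = 0 \<and> n - 1 - j + j' = n - 1 \<and> k' + (n - 1 - k) = n - 1 then 1 else 0)"
    by (rule phi_F_K_monomial_E)
  also have "\<dots> = (if m' = m then 1 else 0)"
  proof (cases "m' = m")
    case True
    then have "n - i + i' = n" using m bounds by simp
    then have "inverse q ^ ((n - 1 - j) * (n - i + i')) = (inverse q ^ n) ^ (n - 1 - j)"
      by (simp only: mult.commute[of "n - 1 - j" n] power_mult)
    then have "inverse q ^ ((n - 1 - j) * (n - i + i')) = 1"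
      using q_root by (simp add: power_inverse)
    then show ?thesis using True m bounds by simp
  next
    case False
    then show ?thesis using m bounds diff_add_mod_eq_0_iff[of i n i'] by auto
  qed
  finally show ?thesis .
qed

lemma symmetric_form_intg_K: "symmetric_form (\<lambda>h g. intg (K * h * g))"
  unfolding symmetric_form_def using phi_commute by (simp add: phi_def mult.assoc)

lemma frobenius_form_intg_K: "frobenius_form scl (\<lambda>h g. intg (K * h * g))"
proof -
  have form_eq: "(\<lambda>h g. intg (K * h * g)) = (\<lambda>h g. phi (h * g))"
    by (simp add: phi_def mult.assoc)
  have lin_left: "Vector_Spaces.linear scl (*) (\<lambda>h. phi (h * g))" for g
    using linear_sandwich[OF phi_linear, of 1 g] by simp
  have lin_right: "Vector_Spaces.linear scl (*) (\<lambda>g. phi (h * g))" for h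
    using linear_sandwich[OF phi_linear, of h 1] by simp
  have inj: "inj_on monomial ({..<n} \<times> {..<n} \<times> {..<n})"
    using monomials_inj by (simp add: monomial_def)
  have dual_right: "phi (monomial m * dual_monomial m') = (if m = m' then 1 else 0)"
    if "m \<in> {..<n} \<times> {..<n} \<times> {..<n}" "m' \<in> {..<n} \<times> {..<n} \<times> {..<n}" for m m'
    using phi_monomial_dual_monomial[OF that(2,1)] .
  have dual_left: "phi (dual_monomial m * monomial m') = (if m = m' then 1 else 0)"
    if "m \<in> {..<n} \<times> {..<n} \<times> {..<n}" "m' \<in> {..<n} \<times> {..<n} \<times> {..<n}" for m m'
    using phi_monomial_dual_monomial[OF that] phi_commute by auto
  have "bij_betw (\<lambda>h g. phi (h * g)) UNIV {f. Vector_Spaces.linear scl (*) f}"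
    by (rule bij_betw_form_of_dual_bases[OF lin_left lin_right _ inj span_monomials dual_right dual_left])
      simp_all
  then show ?thesis
    unfolding frobenius_form_def form_eq using lin_left lin_right by (simp add: mult.assoc)
qed

end

theorem mainTheorem6:
  fixes n :: nat and q :: complex
    and scl :: "complex \<Rightarrow> 'a::ring_1 \<Rightarrow> 'a"
    and K E F :: 'a
    and intg :: "'a \<Rightarrow> complex"
  assumes n2: "n \<ge> 2"
    and prim: "primitive_root_of_unity n q"
    and alg: "complex_algebra scl"
    and relK: "K ^ n = 1"
    and relE: "E ^ n = 0"
    and relF: "F ^ n = 0"
    and relEK: "E * K = scl q (K * E)"
    and relFK: "F * K = scl (inverse q) (K * F)"
    and relEF: "E * F - F * E = scl (1 / (q - inverse q)) (K - K ^ (n - 1))"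
    and basis_inj: "inj_on (\<lambda>(i, j, k). K ^ i * F ^ j * E ^ k) ({..<n} \<times> {..<n} \<times> {..<n})"
    and basis_indep: "\<not> module.dependent scl ((\<lambda>(i, j, k). K ^ i * F ^ j * E ^ k) ` ({..<n} \<times> {..<n} \<times> {..<n}))"
    and basis_span: "module.span scl ((\<lambda>(i, j, k). K ^ i * F ^ j * E ^ k) ` ({..<n} \<times> {..<n} \<times> {..<n})) = UNIV"
    and intg_lin: "Vector_Spaces.linear scl (*) intg"
    and intg_basis: "\<And>i j k. i < n \<Longrightarrow> j < n \<Longrightarrow> k < n \<Longrightarrow>
        intg (K ^ i * F ^ j * E ^ k) = (if i = 1 \<and> j = n - 1 \<and> k = n - 1 then 1 else 0)"
  shows "frobenius_form scl (\<lambda>h g. intg (K * h * g)) \<and> symmetric_form (\<lambda>h g. intg (K * h * g))"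
proof -
  have "q ^ n = 1"
    using prim unfolding primitive_root_of_unity_def by blast
  then interpret small_quantum_sl2 scl n q K E F intg
    unfolding small_quantum_sl2_def small_quantum_sl2_axioms_def complex_assoc_algebra_def
    using alg n2 relK relE relF relEK relFK relEF basis_inj basis_span intg_lin intg_basis
    by blast
  show ?thesis
    using frobenius_form_intg_K symmetric_form_intg_K ..
qed

end
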